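(* Let $R$ be a $*$-ring with unity such that $xa=ax^*$ for all $a,x\in R$. Then the natural partial order is compatible with multiplication: if $a\leq b$ then $ca\leq cb$ (and $ac\leq bc$) for all $c\in R$.
   Context: The natural partial order on a $*$-ring $R$ with unity: $a\leq b$ iff there is $x\in R$ with $a=xa=xb=ax^*=bx^*$. *)

theory Defs
  imports Main
begin

class star_ring_1 = ring_1 +
  fixes star :: "'a \<Rightarrow> 'a"
  assumes star_add: "star (a + b) = star a + star b"
    and star_mult: "star (a * b) = star b * star a"
    and star_star: "star (star a) = a"

definition nat_le :: "'a::star_ring_1 \<Rightarrow> 'a \<Rightarrow> bool" where
  "nat_le a b \<longleftrightarrow> (\<exists>x. a = x * a \<and> a = x * b \<and> a = a * star x \<and> a = b * star x)"

end

theory Submission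
  imports Defs
begin

text \<open>If \<open>c\<close> is central, the witness \<open>x\<close> of \<open>a \<le> b\<close> also witnesses \<open>c a \<le> c b\<close> and
  \<open>a c \<le> b c\<close>. The hypothesis \<open>x a = a x\<^sup>*\<close> of the theorem makes every element central:
  with \<open>a = 1\<close> it gives \<open>x\<^sup>* = x\<close>, and then it reads \<open>x a = a x\<close>.\<close>

lemma nat_le_mult_left_central:
  fixes a b c :: "'a::star_ring_1"
  assumes le: "nat_le a b" and central: "\<And>y. c * y = y * c"
  shows "nat_le (c * a) (c * b)"
proof -
  obtain x where x: "a = x * a" "a = x * b" "a = a * star x" "a = b * star x"
    using le unfolding nat_le_def by blast
  have "c * a = x * (c * a)"
    using x(1) central[of x] by (metis mult.assoc)
  moreover have "c * a = x * (c * b)"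
    using x(2) central[of x] by (metis mult.assoc)
  moreover have "c * a = c * a * star x" "c * a = c * b * star x"
    using x(3,4) by (metis mult.assoc)+
  ultimately show ?thesis
    unfolding nat_le_def by blast
qed

lemma nat_le_mult_right_central:
  fixes a b c :: "'a::star_ring_1"
  assumes le: "nat_le a b" and central: "\<And>y. c * y = y * c"
  shows "nat_le (a * c) (b * c)"
proof -
  obtain x where x: "a = x * a" "a = x * b" "a = a * star x" "a = b * star x"
    using le unfolding nat_le_def by blast
  have "a * c = x * (a * c)" "a * c = x * (b * c)"
    using x(1,2) by (metis mult.assoc)+
  moreover have "a * c = a * c * star x"
    using x(3) central[of "star x"] by (metis mult.assoc)
  moreover have "a * c = b * c * star x"
    using x(4) central[of "star x"] by (metis mult.assoc)
  ultimately show ?thesis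
    unfolding nat_le_def by blast
qed

lemma star_eq_self_if_mult_eq_mult_star:
  fixes x :: "'a::star_ring_1"
  assumes "\<And>u x :: 'a. x * u = u * star x"
  shows "star x = x"
  using assms[where u = 1 and x = x] by simp

theorem mainTheorem5:
  fixes a b :: "'a::star_ring_1"
  assumes comm: "\<And>u x :: 'a. x * u = u * star x"
    and le: "nat_le a b"
  shows "\<forall>c::'a. nat_le (c * a) (c * b) \<and> nat_le (a * c) (b * c)"
proof
  fix c :: 'a
  have central: "c * y = y * c" for y
    using comm[of y c] star_eq_self_if_mult_eq_mult_star[OF comm] by simp
  show "nat_le (c * a) (c * b) \<and> nat_le (a * c) (b * c)"
    using nat_le_mult_left_central[OF le central] nat_le_mult_right_central[OF le central]
    by blast
qed

end
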